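(* Under the hypotheses of the previous proposition (Assumption (A), $q\in[0,1)$, $l\ge0$, $S_H>0$, positive epidemiological parameters, $\hat R_e h(p(0),q)>1$, $n=1$, and existence of an equilibrium of (O) with $I_H^*>0$), if $\gamma\ge\mu$ then this equilibrium is locally asymptotically stable for every $k>0$.
   Context: Assumption (A): $a,w:[0,\infty)\to(0,\infty)$ are continuously differentiable with $a'(x)>0$ and $w'(x)\le0$ for all $x\ge0$. Let $c(p,q):=1-p(1-q)$, $p(x):=a(x)/(a(x)+w(x))$, $h(p,q):=c(p,q)/(c(p,q)+l)$, $f(x):=h(p(x),q)$, and $\hat R_e:=\sqrt{\frac{\beta_{H\leftarrow M}\beta_{M\leftarrow H}}{\gamma\mu}\rho S_H}$. For $n=1$, system (O) is, with $S_H>0$ fixed, $$\dot I_H=\beta_{H\leftarrow M}\rho S_H f(J)I_M-\gamma I_H,\qquad \dot I_M=\beta_{M\leftarrow H}f(J)I_H-\mu I_M,\qquad \dot J=kI_H-kJ.$$ *)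

theory Defs
  imports "HOL-Analysis.Analysis"
begin

definition c_fun :: "real \<Rightarrow> real \<Rightarrow> real" where
  "c_fun p q = 1 - p * (1 - q)"

definition p_fun :: "(real \<Rightarrow> real) \<Rightarrow> (real \<Rightarrow> real) \<Rightarrow> real \<Rightarrow> real" where
  "p_fun a w x = a x / (a x + w x)"

definition h_fun :: "real \<Rightarrow> real \<Rightarrow> real \<Rightarrow> real" where
  "h_fun l p q = c_fun p q / (c_fun p q + l)"

definition f_fun :: "(real \<Rightarrow> real) \<Rightarrow> (real \<Rightarrow> real) \<Rightarrow> real \<Rightarrow> real \<Rightarrow> real \<Rightarrow> real" where
  "f_fun a w q l x = h_fun l (p_fun a w x) q"

definition Re_hat :: "real \<Rightarrow> real \<Rightarrow> real \<Rightarrow> real \<Rightarrow> real \<Rightarrow> real \<Rightarrow> real" where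
  "Re_hat bHM bMH gam mu rho SH = sqrt (bHM * bMH / (gam * mu) * rho * SH)"

definition rhsO ::
  "(real \<Rightarrow> real) \<Rightarrow> (real \<Rightarrow> real) \<Rightarrow> real \<Rightarrow> real \<Rightarrow> real \<Rightarrow> real \<Rightarrow> real \<Rightarrow> real
   \<Rightarrow> real \<Rightarrow> real \<Rightarrow> real \<Rightarrow> real \<times> real \<times> real \<Rightarrow> real \<times> real \<times> real" where
  "rhsO a w q l bHM bMH gam mu rho SH k = (\<lambda>(IH, IM, J).
     (bHM * rho * SH * f_fun a w q l J * IM - gam * IH,
      bMH * f_fun a w q l J * IH - mu * IM,
      k * IH - k * J))"

definition loc_asym_stable :: "('v::real_normed_vector \<Rightarrow> 'v) \<Rightarrow> 'v \<Rightarrow> bool" where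
  "loc_asym_stable F e \<longleftrightarrow>
     (\<forall>\<epsilon>>0. \<exists>\<delta>>0. \<forall>x::real \<Rightarrow> 'v.
        ((\<forall>t\<ge>0. (x has_vector_derivative F (x t)) (at t within {0..})) \<and> dist (x 0) e < \<delta>)
        \<longrightarrow> (\<forall>t\<ge>0. dist (x t) e < \<epsilon>)) \<and>
     (\<exists>\<delta>>0. \<forall>x::real \<Rightarrow> 'v.
        ((\<forall>t\<ge>0. (x has_vector_derivative F (x t)) (at t within {0..})) \<and> dist (x 0) e < \<delta>)
        \<longrightarrow> (x \<longlongrightarrow> e) at_top)"

end

theory Submission
  imports Defs "HOL-Real_Asymp.Real_Asymp"
begin

(* Write y, z, j for the deviations of I_H, I_M, J from the endemic equilibrium (IHs, IMs, Js),
   A for beta_{H<-M} rho S_H and u = A f(Js). At the equilibrium Js = IHs and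
   A beta_{M<-H} f(Js)^2 = gamma mu, so in the coordinates sigma = mu y + u z and D = y - (u/gamma) z
   the system reads
     sigma' = -b j + o(j),   D' = -(gamma + mu) D - d j + o(j),   j' = e1 sigma + e2 D - k j
   with e1, e2 > 0, e2 < k, b = -f'(Js) (mu A IMs + u beta_{M<-H} IHs) > 0 and
   d = -f'(Js) A IMs (gamma - mu) / gamma; the hypothesis gamma >= mu is exactly what makes d >= 0.
   For such a system the quadratic form (e1/b) sigma^2 + j^2 + lambda D^2 - 2 eps sigma j, with
   lambda = e2 / (d + gamma + mu) and eps small, decays exponentially along solutions near the
   origin, and Lyapunov's direct method gives local asymptotic stability. *)

section \<open>Lyapunov's direct method\<close>

lemma continuous_on_barrier:
  fixes g :: "real \<Rightarrow> real"
  assumes cont: "continuous_on {0..} g"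
    and step: "\<And>T. 0 \<le> T \<Longrightarrow> (\<And>s. 0 \<le> s \<Longrightarrow> s < T \<Longrightarrow> g s < K) \<Longrightarrow> g T < K"
    and t: "0 \<le> t"
  shows "g t < K"
proof (rule ccontr)
  assume "\<not> g t < K"
  define S where "S = {0..t} \<inter> g -` {K..}"
  have "closed S"
    unfolding S_def by (rule continuous_closed_preimage) (auto intro: continuous_on_subset[OF cont])
  moreover have "t \<in> S" using t \<open>\<not> g t < K\<close> by (simp add: S_def)
  moreover have below: "bdd_below S" unfolding S_def by (auto intro: bdd_belowI[of _ 0])
  ultimately have "Inf S \<in> S" using closed_contains_Inf by blast
  moreover have "g s < K" if "0 \<le> s" "s < Inf S" for s
    using cInf_lower[OF _ below, of s] that \<open>Inf S \<in> S\<close> by (force simp: S_def)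
  ultimately show False using step[of "Inf S"] by (auto simp: S_def)
qed

lemma exp_decay_of_derivative_bound:
  fixes g g' :: "real \<Rightarrow> real"
  assumes T: "0 \<le> T" and cont: "continuous_on {0..T} g"
    and deriv: "\<And>s. 0 < s \<Longrightarrow> s < T \<Longrightarrow> (g has_real_derivative g' s) (at s)"
    and bound: "\<And>s. 0 < s \<Longrightarrow> s < T \<Longrightarrow> g' s \<le> - c * g s"
  shows "g T \<le> g 0 * exp (- c * T)"
proof -
  define \<psi> where "\<psi> s = g s * exp (c * s)" for s
  have "\<psi> T \<le> \<psi> 0"
  proof (rule DERIV_nonpos_imp_decreasing_open[OF T])
    fix s assume s: "0 < s" "s < T"
    have "(\<psi> has_real_derivative (g' s + c * g s) * exp (c * s)) (at s)"
      unfolding \<psi>_def by (rule derivative_eq_intros deriv[OF s] refl | simp add: algebra_simps)+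
    moreover have "(g' s + c * g s) * exp (c * s) \<le> 0"
      using bound[OF s] by (simp add: mult_nonpos_nonneg)
    ultimately show "\<exists>y. (\<psi> has_real_derivative y) (at s) \<and> y \<le> 0" by blast
  qed (auto simp: \<psi>_def intro!: continuous_intros cont)
  then show ?thesis by (simp add: \<psi>_def exp_minus field_simps)
qed

lemma has_real_derivative_comp_vector_derivative:
  fixes x :: "real \<Rightarrow> 'v::real_normed_vector"
  assumes "(V has_derivative L) (at (x t))"
    and "(x has_vector_derivative v) (at t within S)"
  shows "((\<lambda>s. V (x s)) has_real_derivative L v) (at t within S)"
proof -
  have "bounded_linear L" using assms(1) has_derivative_bounded_linear by blast
  then have "(\<lambda>h. L (h *\<^sub>R v)) = (\<lambda>h. L v * h)"
    by (simp add: linear_simps mult.commute)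
  then show ?thesis
    using has_derivative_compose[OF assms(2)[unfolded has_vector_derivative_def] assms(1)]
    by (simp add: has_field_derivative_def)
qed

lemma lyapunov_exponential_decay:
  fixes F :: "'v::real_normed_vector \<Rightarrow> 'v" and x :: "real \<Rightarrow> 'v"
  assumes V': "\<And>p. (V has_derivative V' p) (at p)" and V_nonneg: "\<And>p. 0 \<le> V p"
    and V'_bound: "\<And>p. V p < K \<Longrightarrow> V' p (F p) \<le> - c * V p" and c: "0 \<le> c"
    and sol: "\<forall>t\<ge>0. (x has_vector_derivative F (x t)) (at t within {0..})"
    and start: "V (x 0) < K"
    and t: "0 \<le> t"
  shows "V (x t) \<le> V (x 0) * exp (- c * t)"
proof -
  have deriv: "((\<lambda>s. V (x s)) has_real_derivative V' (x s) (F (x s))) (at s within {0..})"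
    if "0 \<le> s" for s
    by (rule has_real_derivative_comp_vector_derivative[OF V']) (use sol that in blast)
  then have cont: "continuous_on {0..} (\<lambda>s. V (x s))"
    by (meson DERIV_continuous atLeast_iff continuous_on_eq_continuous_within)
  have decay: "V (x T) \<le> V (x 0) * exp (- c * T)"
    if T: "0 \<le> T" and inside: "\<And>s. 0 \<le> s \<Longrightarrow> s < T \<Longrightarrow> V (x s) < K" for T
  proof (rule exp_decay_of_derivative_bound[OF T])
    show "continuous_on {0..T} (\<lambda>s. V (x s))" using cont by (rule continuous_on_subset) auto
    fix s assume s: "0 < s" "s < T"
    have "at s within {0..} = at s" by (rule at_within_interior) (use s in auto)
    then show "((\<lambda>s. V (x s)) has_real_derivative V' (x s) (F (x s))) (at s)"
      using deriv[of s] s by simp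
    show "V' (x s) (F (x s)) \<le> - c * V (x s)" using V'_bound inside s by simp
  qed
  have "V (x s) < K" if "0 \<le> s" for s
  proof (rule continuous_on_barrier[OF cont _ that])
    fix T assume "0 \<le> T" "\<And>s. 0 \<le> s \<Longrightarrow> s < T \<Longrightarrow> V (x s) < K"
    with decay have "V (x T) \<le> V (x 0) * exp (- c * T)" by blast
    also have "\<dots> \<le> V (x 0)" using V_nonneg c \<open>0 \<le> T\<close> by (simp add: mult_left_le)
    finally show "V (x T) < K" using start by linarith
  qed
  then show ?thesis using decay[OF t] by blast
qed

lemma lyapunov_dist_bound:
  fixes F :: "'v::real_normed_vector \<Rightarrow> 'v" and x :: "real \<Rightarrow> 'v"
  assumes V': "\<And>p. (V has_derivative V' p) (at p)"
    and V_lower: "\<And>p. \<kappa> * (dist p e)\<^sup>2 \<le> V p" and \<kappa>: "0 < \<kappa>"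
    and R: "0 < R" and V'_bound: "\<And>p. dist p e < R \<Longrightarrow> V' p (F p) \<le> - c * V p"
    and c: "0 \<le> c" and sol: "\<forall>t\<ge>0. (x has_vector_derivative F (x t)) (at t within {0..})"
    and start: "V (x 0) < \<kappa> * R\<^sup>2"
    and t: "0 \<le> t"
  shows "dist (x t) e \<le> sqrt (V (x 0) * exp (- c * t) / \<kappa>)"
proof -
  have V_nonneg: "0 \<le> V p" for p
    using V_lower[of p] \<kappa> by (meson order_trans zero_le_mult_iff zero_le_power2 less_imp_le)
  have near: "dist p e < R" if "V p < \<kappa> * R\<^sup>2" for p
  proof -
    have "\<kappa> * (dist p e)\<^sup>2 < \<kappa> * R\<^sup>2" using V_lower[of p] that by linarith
    then have "(dist p e)\<^sup>2 < R\<^sup>2" using \<kappa> by simp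
    then show ?thesis by (rule power_less_imp_less_base) (use R in simp)
  qed
  have "V (x t) \<le> V (x 0) * exp (- c * t)"
    using lyapunov_exponential_decay[OF V' V_nonneg _ c sol start t] V'_bound near by blast
  then have "V (x t) / \<kappa> \<le> V (x 0) * exp (- c * t) / \<kappa>" using \<kappa> by (simp add: divide_right_mono)
  moreover have "dist (x t) e \<le> sqrt (V (x t) / \<kappa>)"
    using V_lower[of "x t"] \<kappa> by (simp add: real_le_rsqrt pos_le_divide_eq mult.commute)
  ultimately show ?thesis using real_sqrt_le_mono order_trans by blast
qed

lemma lyapunov_stable:
  fixes F :: "'v::real_normed_vector \<Rightarrow> 'v"
  assumes V': "\<And>p. (V has_derivative V' p) (at p)"
    and V_lower: "\<And>p. \<kappa> * (dist p e)\<^sup>2 \<le> V p" and \<kappa>: "0 < \<kappa>" and V_e: "V e = 0"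
    and R: "0 < R" and V'_bound: "\<And>p. dist p e < R \<Longrightarrow> V' p (F p) \<le> - c * V p" and c: "0 \<le> c"
    and \<epsilon>: "0 < \<epsilon>"
  obtains \<delta> where "0 < \<delta>"
    "\<And>x t. \<forall>t\<ge>0. (x has_vector_derivative F (x t)) (at t within {0..}) \<Longrightarrow> dist (x 0) e < \<delta> \<Longrightarrow>
      0 \<le> t \<Longrightarrow> dist (x t) e < \<epsilon>"
proof -
  define m where "m = min \<epsilon> R"
  have m: "0 < m" "m \<le> \<epsilon>" "m \<le> R" using \<epsilon> R by (auto simp: m_def)
  then have m_R: "\<kappa> * m\<^sup>2 \<le> \<kappa> * R\<^sup>2" using \<kappa> by (intro mult_left_mono power_mono) auto
  have "isCont V e" using V' has_derivative_continuous by blast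
  then obtain \<delta> where \<delta>: "0 < \<delta>" "\<And>p. dist p e < \<delta> \<Longrightarrow> V p < \<kappa> * m\<^sup>2"
    using V_e \<kappa> m unfolding continuous_at_eps_delta
    by (metis dist_real_def abs_less_iff diff_zero zero_less_power mult_pos_pos)
  show thesis
  proof (rule that[OF \<delta>(1)])
    fix x :: "real \<Rightarrow> 'v" and t :: real
    assume sol: "\<forall>t\<ge>0. (x has_vector_derivative F (x t)) (at t within {0..})" and "dist (x 0) e < \<delta>"
      and "0 \<le> t"
    then have x0: "V (x 0) < \<kappa> * m\<^sup>2" using \<delta>(2) by blast
    have "dist (x t) e \<le> sqrt (V (x 0) * exp (- c * t) / \<kappa>)"
      using x0 m_R by (intro lyapunov_dist_bound[OF V' V_lower \<kappa> R V'_bound c sol _ \<open>0 \<le> t\<close>]) auto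
    also have "\<dots> \<le> sqrt (V (x 0) / \<kappa>)"
    proof -
      have "0 \<le> V (x 0)"
        using V_lower[of "x 0"] \<kappa> by (meson order_trans zero_le_mult_iff zero_le_power2 less_imp_le)
      then have "V (x 0) * exp (- c * t) \<le> V (x 0)" using c \<open>0 \<le> t\<close> by (simp add: mult_left_le)
      then show ?thesis using \<kappa> by (simp add: divide_right_mono)
    qed
    also have "\<dots> < m"
    proof -
      have "V (x 0) / \<kappa> < m\<^sup>2" using x0 \<kappa> by (simp add: pos_divide_less_eq mult.commute)
      from real_sqrt_less_mono[OF this] show ?thesis using m(1) by simp
    qed
    finally show "dist (x t) e < \<epsilon>" using m(2) by linarith
  qed
qed

lemma lyapunov_attractive:
  fixes F :: "'v::real_normed_vector \<Rightarrow> 'v"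
  assumes V': "\<And>p. (V has_derivative V' p) (at p)"
    and V_lower: "\<And>p. \<kappa> * (dist p e)\<^sup>2 \<le> V p" and \<kappa>: "0 < \<kappa>" and V_e: "V e = 0"
    and R: "0 < R" and V'_bound: "\<And>p. dist p e < R \<Longrightarrow> V' p (F p) \<le> - c * V p" and c: "0 < c"
  obtains \<delta> where "0 < \<delta>"
    "\<And>x. \<forall>t\<ge>0. (x has_vector_derivative F (x t)) (at t within {0..}) \<Longrightarrow> dist (x 0) e < \<delta> \<Longrightarrow>
      (x \<longlongrightarrow> e) at_top"
proof -
  have "isCont V e" using V' has_derivative_continuous by blast
  then obtain \<delta> where \<delta>: "0 < \<delta>" "\<And>p. dist p e < \<delta> \<Longrightarrow> V p < \<kappa> * R\<^sup>2"
    using V_e \<kappa> R unfolding continuous_at_eps_delta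
    by (metis dist_real_def abs_less_iff diff_zero zero_less_power mult_pos_pos)
  show thesis
  proof (rule that[OF \<delta>(1)])
    fix x :: "real \<Rightarrow> 'v"
    assume sol: "\<forall>t\<ge>0. (x has_vector_derivative F (x t)) (at t within {0..})" and "dist (x 0) e < \<delta>"
    then have x0: "V (x 0) < \<kappa> * R\<^sup>2" using \<delta>(2) by blast
    have "((\<lambda>t. exp (- c * t)) \<longlongrightarrow> 0) at_top" using c by real_asymp
    then have "((\<lambda>t. V (x 0) * exp (- c * t) / \<kappa>) \<longlongrightarrow> 0) at_top"
      by (intro tendsto_divide_zero tendsto_mult_right_zero)
    then have lim: "((\<lambda>t. sqrt (V (x 0) * exp (- c * t) / \<kappa>)) \<longlongrightarrow> 0) at_top"
      using tendsto_real_sqrt by fastforce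
    have upper: "\<forall>\<^sub>F t in at_top. dist (x t) e \<le> sqrt (V (x 0) * exp (- c * t) / \<kappa>)"
      using eventually_ge_at_top[of 0]
      by (rule eventually_mono) (use lyapunov_dist_bound[OF V' V_lower \<kappa> R V'_bound _ sol x0] c in simp)
    have "((\<lambda>t. dist (x t) e) \<longlongrightarrow> 0) at_top"
      by (rule tendsto_sandwich[OF _ upper tendsto_const lim]) simp
    then show "(x \<longlongrightarrow> e) at_top" by (rule tendsto_dist_iff[THEN iffD2])
  qed
qed

lemma loc_asym_stable_by_lyapunov:
  fixes F :: "'v::real_normed_vector \<Rightarrow> 'v"
  assumes V': "\<And>p. (V has_derivative V' p) (at p)"
    and V_lower: "\<And>p. \<kappa> * (dist p e)\<^sup>2 \<le> V p" and \<kappa>: "0 < \<kappa>" and V_e: "V e = 0"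
    and V'_bound: "\<forall>\<^sub>F p in nhds e. V' p (F p) \<le> - c * V p" and c: "0 < c"
  shows "loc_asym_stable F e"
proof -
  obtain R where R: "0 < R" and V'_bound_R: "\<And>p. dist p e < R \<Longrightarrow> V' p (F p) \<le> - c * V p"
    using V'_bound unfolding eventually_nhds_metric by blast
  have "\<exists>\<delta>>0. \<forall>x. (\<forall>t\<ge>0. (x has_vector_derivative F (x t)) (at t within {0..}))
      \<and> dist (x 0) e < \<delta> \<longrightarrow> (\<forall>t\<ge>0. dist (x t) e < \<epsilon>)" if "0 < \<epsilon>" for \<epsilon>
  proof (rule lyapunov_stable[OF V' V_lower \<kappa> V_e R V'_bound_R less_imp_le[OF c] that])
    fix \<delta> assume "0 < \<delta>" and "\<And>x t. \<forall>t\<ge>0. (x has_vector_derivative F (x t)) (at t within {0..}) \<Longrightarrow>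
      dist (x 0) e < \<delta> \<Longrightarrow> 0 \<le> t \<Longrightarrow> dist (x t) e < \<epsilon>"
    then show ?thesis by blast
  qed
  moreover have "\<exists>\<delta>>0. \<forall>x. (\<forall>t\<ge>0. (x has_vector_derivative F (x t)) (at t within {0..}))
      \<and> dist (x 0) e < \<delta> \<longrightarrow> (x \<longlongrightarrow> e) at_top"
  proof (rule lyapunov_attractive[OF V' V_lower \<kappa> V_e R V'_bound_R c])
    fix \<delta> assume "0 < \<delta>" and "\<And>x. \<forall>t\<ge>0. (x has_vector_derivative F (x t)) (at t within {0..}) \<Longrightarrow>
      dist (x 0) e < \<delta> \<Longrightarrow> (x \<longlongrightarrow> e) at_top"
    then show ?thesis by blast
  qed
  ultimately show ?thesis unfolding loc_asym_stable_def by blast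
qed

section \<open>A quadratic Lyapunov function for a perturbed linear system\<close>

definition lyap_form :: "real \<Rightarrow> real \<Rightarrow> real \<Rightarrow> real \<times> real \<times> real \<Rightarrow> real" where
  "lyap_form \<beta> lam \<epsilon> = (\<lambda>(\<sigma>, D, j). \<beta> * \<sigma>\<^sup>2 + j\<^sup>2 + lam * D\<^sup>2 - 2 * \<epsilon> * \<sigma> * j)"

definition lyap_bilinear ::
  "real \<Rightarrow> real \<Rightarrow> real \<Rightarrow> real \<times> real \<times> real \<Rightarrow> real \<times> real \<times> real \<Rightarrow> real" where
  "lyap_bilinear \<beta> lam \<epsilon> = (\<lambda>(\<sigma>, D, j) (\<sigma>', D', j').
     \<beta> * \<sigma> * \<sigma>' + j * j' + lam * D * D' - \<epsilon> * (\<sigma> * j' + \<sigma>' * j))"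

lemma has_derivative_lyap_form:
  "(lyap_form \<beta> lam \<epsilon> has_derivative (\<lambda>h. 2 * lyap_bilinear \<beta> lam \<epsilon> v h)) (at v)"
proof -
  obtain \<sigma> D j where v: "v = (\<sigma>, D, j)" by (cases v) auto
  have "lyap_form \<beta> lam \<epsilon> = (\<lambda>w. \<beta> * (fst w)\<^sup>2 + (snd (snd w))\<^sup>2 + lam * (fst (snd w))\<^sup>2
      - 2 * \<epsilon> * fst w * snd (snd w))"
    by (auto simp: lyap_form_def)
  moreover have "(\<lambda>h. 2 * lyap_bilinear \<beta> lam \<epsilon> v h) = (\<lambda>h. \<beta> * (2 * \<sigma> * fst h)
      + 2 * j * snd (snd h) + lam * (2 * D * fst (snd h))
      - 2 * \<epsilon> * (fst h * j + \<sigma> * snd (snd h)))"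
    by (auto simp: lyap_bilinear_def v algebra_simps)
  ultimately show ?thesis
    unfolding v by (auto intro!: derivative_eq_intros simp: power2_eq_square algebra_simps)
qed

lemma lyap_bilinear_add_right:
  "lyap_bilinear \<beta> lam \<epsilon> v (h + h') = lyap_bilinear \<beta> lam \<epsilon> v h + lyap_bilinear \<beta> lam \<epsilon> v h'"
  by (cases v; cases h; cases h') (simp add: lyap_bilinear_def algebra_simps)

lemma lyap_form_cross_term_bounds:
  assumes "0 \<le> lam" "0 \<le> \<epsilon>" "2 * \<epsilon> \<le> \<beta>" "2 * \<epsilon> \<le> 1"
  shows "lyap_form \<beta> lam 0 v \<le> 2 * lyap_form \<beta> lam \<epsilon> v"
    and "2 * lyap_form \<beta> lam \<epsilon> v \<le> 3 * lyap_form \<beta> lam 0 v"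
proof -
  obtain \<sigma> D j where v: "v = (\<sigma>, D, j)" by (cases v) auto
  have "\<bar>2 * \<sigma> * j\<bar> \<le> \<sigma>\<^sup>2 + j\<^sup>2"
    using sum_squares_bound[of "\<bar>\<sigma>\<bar>" "\<bar>j\<bar>"] by (simp add: abs_mult)
  then have "\<bar>2 * \<epsilon> * \<sigma> * j\<bar> \<le> \<epsilon> * \<sigma>\<^sup>2 + \<epsilon> * j\<^sup>2"
    using mult_left_mono[of _ _ \<epsilon>] assms(2) by (fastforce simp: abs_mult algebra_simps)
  moreover have "\<epsilon> * \<sigma>\<^sup>2 \<le> \<beta> / 2 * \<sigma>\<^sup>2" "\<epsilon> * j\<^sup>2 \<le> 1 / 2 * j\<^sup>2"
    by (rule mult_right_mono; use assms in simp)+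
  moreover have "0 \<le> lam * D\<^sup>2" using assms(1) by simp
  ultimately show "lyap_form \<beta> lam 0 v \<le> 2 * lyap_form \<beta> lam \<epsilon> v"
    and "2 * lyap_form \<beta> lam \<epsilon> v \<le> 3 * lyap_form \<beta> lam 0 v"
    by (simp_all add: lyap_form_def v abs_le_iff)
qed

lemma lyap_form_ge_norm:
  assumes "0 \<le> \<beta>" "0 \<le> lam"
  shows "min \<beta> (min 1 lam) * (norm v)\<^sup>2 \<le> lyap_form \<beta> lam 0 v"
proof -
  obtain \<sigma> D j where v: "v = (\<sigma>, D, j)" by (cases v) auto
  define m where "m = min \<beta> (min 1 lam)"
  have "m * \<sigma>\<^sup>2 \<le> \<beta> * \<sigma>\<^sup>2" "m * j\<^sup>2 \<le> 1 * j\<^sup>2" "m * D\<^sup>2 \<le> lam * D\<^sup>2"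
    by (rule mult_right_mono; simp add: m_def)+
  moreover have "(norm v)\<^sup>2 = \<sigma>\<^sup>2 + D\<^sup>2 + j\<^sup>2" by (simp add: v norm_Pair add.assoc)
  ultimately show ?thesis by (simp add: m_def[symmetric] lyap_form_def v algebra_simps)
qed

lemma young_inequality_real:
  fixes x y t :: real
  assumes "0 < t"
  shows "2 * x * y \<le> t * x\<^sup>2 + y\<^sup>2 / t"
proof -
  have "0 \<le> (t * x - y)\<^sup>2 / t" using assms by simp
  also have "\<dots> = t * x\<^sup>2 + y\<^sup>2 / t - 2 * x * y"
    using assms by (simp add: field_simps power2_eq_square)
  finally show ?thesis by simp
qed

(* With beta = e1/b the sigma-j cross terms cancel, and lam (d + s) = e2 turns the D-j cross term
   into 2 lam s j D, which the j^2 and D^2 terms absorb because lam s <= e2 <= k. *)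
lemma lyap_bilinear_linear_part:
  assumes b: "0 < b" and d: "0 \<le> d" and s: "0 \<le> s" and e1: "0 < e1" and e2k: "e2 \<le> k"
    and lam: "0 \<le> lam" "lam * (d + s) = e2" and \<epsilon>: "0 \<le> \<epsilon>"
  shows "2 * lyap_bilinear (e1 / b) lam \<epsilon> (\<sigma>, D, j) (- b * j, - s * D - d * j, e1 * \<sigma> + e2 * D - k * j)
    \<le> - (\<epsilon> * e1) * \<sigma>\<^sup>2 - (k - \<epsilon> * (2 * b + 2 * k\<^sup>2 / e1)) * j\<^sup>2
       - (lam * s - 2 * \<epsilon> * e2\<^sup>2 / e1) * D\<^sup>2"
proof -
  define E where "E = 2 * b * j\<^sup>2 - 2 * e1 * \<sigma>\<^sup>2 + 2 * \<sigma> * (- e2 * D) + 2 * \<sigma> * (k * j)"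
  have "2 * lyap_bilinear (e1 / b) lam \<epsilon> (\<sigma>, D, j) (- b * j, - s * D - d * j, e1 * \<sigma> + e2 * D - k * j)
      = lam * s * (2 * j * D) - 2 * k * j\<^sup>2 - 2 * lam * s * D\<^sup>2 + \<epsilon> * E"
    using b lam(2)[symmetric] by (simp add: lyap_bilinear_def E_def field_simps power2_eq_square)
  moreover have "lam * s * (2 * j * D) \<le> lam * s * (j\<^sup>2 + D\<^sup>2)"
    using sum_squares_bound[of j D] lam s by (intro mult_left_mono) auto
  moreover have "lam * s * j\<^sup>2 \<le> k * j\<^sup>2"
  proof (rule mult_right_mono)
    show "lam * s \<le> k" using mult_nonneg_nonneg[OF lam(1) d] lam(2) e2k by (simp add: distrib_left)
  qed simp
  moreover have "\<epsilon> * E \<le> \<epsilon> * (- e1 * \<sigma>\<^sup>2 + (2 * b + 2 * k\<^sup>2 / e1) * j\<^sup>2 + 2 * e2\<^sup>2 / e1 * D\<^sup>2)"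
  proof (intro mult_left_mono \<epsilon>)
    have "2 * \<sigma> * (- e2 * D) \<le> e1 / 2 * \<sigma>\<^sup>2 + 2 * e2\<^sup>2 / e1 * D\<^sup>2"
      using young_inequality_real[of "e1 / 2" \<sigma> "- e2 * D"] e1 by (simp add: power_mult_distrib)
    moreover have "2 * \<sigma> * (k * j) \<le> e1 / 2 * \<sigma>\<^sup>2 + 2 * k\<^sup>2 / e1 * j\<^sup>2"
      using young_inequality_real[of "e1 / 2" \<sigma> "k * j"] e1 by (simp add: power_mult_distrib)
    ultimately show "E \<le> - e1 * \<sigma>\<^sup>2 + (2 * b + 2 * k\<^sup>2 / e1) * j\<^sup>2 + 2 * e2\<^sup>2 / e1 * D\<^sup>2"
      by (simp add: E_def algebra_simps)
  qed
  ultimately show ?thesis by (simp add: algebra_simps)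
qed

lemma lyap_bilinear_perturbation:
  assumes \<beta>: "0 \<le> \<beta>" and lam: "0 \<le> lam" and \<epsilon>: "0 \<le> \<epsilon>" "2 * \<epsilon> \<le> 1"
    and \<rho>: "\<bar>\<rho>1\<bar> \<le> \<theta>" "\<bar>\<rho>2\<bar> \<le> \<theta>"
  shows "2 * lyap_bilinear \<beta> lam \<epsilon> (\<sigma>, D, j) (\<rho>1 * j, \<rho>2 * j, 0)
    \<le> \<theta> * (3 + \<beta> + lam) * lyap_form \<beta> lam 0 (\<sigma>, D, j)"
proof -
  define N where "N = lyap_form \<beta> lam 0 (\<sigma>, D, j)"
  have small: "2 * x * (\<rho> * j) \<le> \<theta> * (x\<^sup>2 + j\<^sup>2)" if "\<bar>\<rho>\<bar> \<le> \<theta>" for x \<rho>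
  proof -
    have "2 * x * (\<rho> * j) \<le> \<bar>\<rho>\<bar> * \<bar>2 * x * j\<bar>"
      by (metis abs_ge_self abs_mult mult.commute mult.left_commute)
    also have "\<dots> \<le> \<theta> * (x\<^sup>2 + j\<^sup>2)"
      using sum_squares_bound[of "\<bar>x\<bar>" "\<bar>j\<bar>"] that by (intro mult_mono) (auto simp: abs_mult)
    finally show ?thesis .
  qed
  have "2 * lyap_bilinear \<beta> lam \<epsilon> (\<sigma>, D, j) (\<rho>1 * j, \<rho>2 * j, 0)
      = \<beta> * (2 * \<sigma> * (\<rho>1 * j)) + lam * (2 * D * (\<rho>2 * j)) - 2 * \<epsilon> * \<rho>1 * j\<^sup>2"
    by (simp add: lyap_bilinear_def algebra_simps power2_eq_square)
  also have "\<dots> \<le> \<theta> * (\<beta> * (\<sigma>\<^sup>2 + j\<^sup>2) + lam * (D\<^sup>2 + j\<^sup>2) + j\<^sup>2)"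
  proof -
    have "- 2 * \<epsilon> * \<rho>1 * j\<^sup>2 \<le> \<theta> * j\<^sup>2"
    proof (rule mult_right_mono)
      have "- 2 * \<epsilon> * \<rho>1 \<le> 2 * \<epsilon> * \<bar>\<rho>1\<bar>" using \<epsilon>(1) mult_left_mono[of "- \<rho>1" "\<bar>\<rho>1\<bar>" \<epsilon>] by simp
      also have "\<dots> \<le> \<theta>" using \<epsilon> \<rho>(1) mult_mono[of "2 * \<epsilon>" 1 "\<bar>\<rho>1\<bar>" \<theta>] by auto
      finally show "- 2 * \<epsilon> * \<rho>1 \<le> \<theta>" .
    qed simp
    then show ?thesis
      using mult_left_mono[OF small[OF \<rho>(1), of \<sigma>] \<beta>] mult_left_mono[OF small[OF \<rho>(2), of D] lam]
      by (simp add: algebra_simps)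
  qed
  also have "\<dots> \<le> \<theta> * ((3 + \<beta> + lam) * N)"
  proof (rule mult_left_mono)
    have "\<beta> * \<sigma>\<^sup>2 \<le> N" "j\<^sup>2 \<le> N" "lam * D\<^sup>2 \<le> N"
      using \<beta> lam by (auto simp: N_def lyap_form_def)
    then show "\<beta> * (\<sigma>\<^sup>2 + j\<^sup>2) + lam * (D\<^sup>2 + j\<^sup>2) + j\<^sup>2 \<le> (3 + \<beta> + lam) * N"
      using mult_left_mono[of "j\<^sup>2" N \<beta>] mult_left_mono[of "j\<^sup>2" N lam] \<beta> lam
      by (simp add: algebra_simps)
  qed (use \<rho> in linarith)
  finally show ?thesis by (simp add: N_def mult.assoc)
qed

lemma lyap_bilinear_linear_part_le_form:
  assumes b: "0 < b" and d: "0 \<le> d" and s: "0 \<le> s" and e1: "0 < e1" and e2k: "e2 \<le> k"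
    and lam: "0 \<le> lam" "lam * (d + s) = e2" and \<epsilon>: "0 \<le> \<epsilon>"
    and \<epsilon>_small: "\<epsilon> * (2 * b + 2 * k\<^sup>2 / e1) \<le> k / 2" "2 * \<epsilon> * e2\<^sup>2 / e1 \<le> lam * s / 2"
  shows "2 * lyap_bilinear (e1 / b) lam \<epsilon> (\<sigma>, D, j) (- b * j, - s * D - d * j, e1 * \<sigma> + e2 * D - k * j)
    \<le> - min (\<epsilon> * b) (min (k / 2) (s / 2)) * lyap_form (e1 / b) lam 0 (\<sigma>, D, j)"
proof -
  define c0 where "c0 = min (\<epsilon> * b) (min (k / 2) (s / 2))"
  have "(k / 2) * j\<^sup>2 \<le> (k - \<epsilon> * (2 * b + 2 * k\<^sup>2 / e1)) * j\<^sup>2"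
      "(lam * s / 2) * D\<^sup>2 \<le> (lam * s - 2 * \<epsilon> * e2\<^sup>2 / e1) * D\<^sup>2"
    by (rule mult_right_mono; use \<epsilon>_small in simp)+
  moreover have "c0 * (e1 / b) \<le> \<epsilon> * e1" "c0 \<le> k / 2" "c0 * lam \<le> s / 2 * lam"
    using mult_right_mono[of c0 "\<epsilon> * b" "e1 / b"] mult_right_mono[of c0 "s / 2" lam] lam b e1
    by (auto simp: c0_def)
  then have "c0 * (e1 / b) * \<sigma>\<^sup>2 \<le> \<epsilon> * e1 * \<sigma>\<^sup>2" "c0 * j\<^sup>2 \<le> k / 2 * j\<^sup>2"
      "c0 * lam * D\<^sup>2 \<le> s / 2 * lam * D\<^sup>2"
    by (auto intro!: mult_right_mono simp del: times_divide_eq_left times_divide_eq_right)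
  moreover have "c0 * lyap_form (e1 / b) lam 0 (\<sigma>, D, j) = c0 * (e1 / b) * \<sigma>\<^sup>2 + c0 * j\<^sup>2 + c0 * lam * D\<^sup>2"
    by (simp add: lyap_form_def algebra_simps)
  moreover note lyap_bilinear_linear_part[OF b d s e1 e2k lam \<epsilon>, of \<sigma> D j]
  ultimately show ?thesis unfolding c0_def[symmetric] by (simp add: algebra_simps)
qed

lemma perturbed_linear_system_lyapunov:
  assumes b: "0 < b" and d: "0 \<le> d" and s: "0 < s" and k: "0 < k"
    and e1: "0 < e1" and e2: "0 < e2" "e2 \<le> k"
  obtains lam \<epsilon> c \<theta> where "0 < lam" "0 < \<epsilon>" "2 * \<epsilon> \<le> e1 / b" "2 * \<epsilon> \<le> 1" "0 < c" "0 < \<theta>"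
    "\<And>\<sigma> D j \<rho>1 \<rho>2. \<bar>\<rho>1\<bar> \<le> \<theta> \<Longrightarrow> \<bar>\<rho>2\<bar> \<le> \<theta> \<Longrightarrow>
      2 * lyap_bilinear (e1 / b) lam \<epsilon> (\<sigma>, D, j)
          (- b * j + \<rho>1 * j, - s * D - d * j + \<rho>2 * j, e1 * \<sigma> + e2 * D - k * j)
        \<le> - c * lyap_form (e1 / b) lam \<epsilon> (\<sigma>, D, j)"
proof -
  define \<beta> where "\<beta> = e1 / b"
  define lam where "lam = e2 / (d + s)"
  have \<beta>: "0 < \<beta>" and lam: "0 < lam" "lam * (d + s) = e2"
    using b d s e1 e2 by (auto simp: \<beta>_def lam_def)
  have small: "\<forall>\<^sub>F \<epsilon> in at_right 0. \<epsilon> * C < M" if "0 < M" for C M :: real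
    using that by (intro order_tendstoD(2)[of _ 0]) (auto intro!: tendsto_eq_intros)
  have "\<forall>\<^sub>F \<epsilon> in at_right 0. 0 < \<epsilon> \<and> \<epsilon> * (2 * b + 2 * k\<^sup>2 / e1) < k / 2
      \<and> \<epsilon> * (2 * e2\<^sup>2 / e1) < lam * s / 2 \<and> \<epsilon> * 2 < \<beta> \<and> \<epsilon> * 2 < 1"
    by (intro eventually_conj eventually_at_right_less small) (use k lam s \<beta> in auto)
  then obtain \<epsilon> where \<epsilon>: "0 < \<epsilon>" "\<epsilon> * (2 * b + 2 * k\<^sup>2 / e1) \<le> k / 2"
      "2 * \<epsilon> * e2\<^sup>2 / e1 \<le> lam * s / 2" "2 * \<epsilon> \<le> \<beta>" "2 * \<epsilon> \<le> 1"
    using eventually_happens'[OF trivial_limit_at_right_real] by force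
  define c0 where "c0 = min (\<epsilon> * b) (min (k / 2) (s / 2))"
  define \<theta> where "\<theta> = c0 / (2 * (3 + \<beta> + lam))"
  have c0: "0 < c0" using \<epsilon> b k s by (simp add: c0_def)
  show thesis
  proof (rule that[of lam \<epsilon> "c0 / 3" \<theta>])
    show "0 < c0 / 3" "0 < \<theta>" using c0 \<beta> lam by (simp_all add: \<theta>_def add_pos_pos)
    fix \<sigma> D j \<rho>1 \<rho>2 :: real assume \<rho>: "\<bar>\<rho>1\<bar> \<le> \<theta>" "\<bar>\<rho>2\<bar> \<le> \<theta>"
    define N where "N = lyap_form \<beta> lam 0 (\<sigma>, D, j)"
    have linear: "2 * lyap_bilinear \<beta> lam \<epsilon> (\<sigma>, D, j) (- b * j, - s * D - d * j, e1 * \<sigma> + e2 * D - k * j)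
        \<le> - c0 * N"
      unfolding \<beta>_def N_def c0_def using b d s e1 e2 lam \<epsilon>
      by (intro lyap_bilinear_linear_part_le_form) auto
    have "2 * lyap_bilinear \<beta> lam \<epsilon> (\<sigma>, D, j) (\<rho>1 * j, \<rho>2 * j, 0) \<le> \<theta> * (3 + \<beta> + lam) * N"
      unfolding N_def using \<beta> lam \<epsilon> \<rho> by (intro lyap_bilinear_perturbation) auto
    also have "\<dots> = c0 / 2 * N"
      using \<beta> lam by (simp add: \<theta>_def field_simps add_pos_pos)
    finally have "2 * lyap_bilinear \<beta> lam \<epsilon> (\<sigma>, D, j)
        (- b * j + \<rho>1 * j, - s * D - d * j + \<rho>2 * j, e1 * \<sigma> + e2 * D - k * j) \<le> - (c0 / 2) * N"
      using linear lyap_bilinear_add_right[of \<beta> lam \<epsilon> "(\<sigma>, D, j)"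
          "(- b * j, - s * D - d * j, e1 * \<sigma> + e2 * D - k * j)" "(\<rho>1 * j, \<rho>2 * j, 0)"]
      by simp
    also have "\<dots> \<le> - (c0 / 3) * lyap_form \<beta> lam \<epsilon> (\<sigma>, D, j)"
      using lyap_form_cross_term_bounds(2)[of lam \<epsilon> \<beta> "(\<sigma>, D, j)"] lam \<epsilon> c0 by (simp add: N_def)
    finally show "2 * lyap_bilinear (e1 / b) lam \<epsilon> (\<sigma>, D, j)
          (- b * j + \<rho>1 * j, - s * D - d * j + \<rho>2 * j, e1 * \<sigma> + e2 * D - k * j)
        \<le> - (c0 / 3) * lyap_form (e1 / b) lam \<epsilon> (\<sigma>, D, j)" by (simp add: \<beta>_def)
  qed (use lam \<epsilon> in \<open>simp_all add: \<beta>_def\<close>)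
qed

lemma loc_asym_stable_by_lyap_form:
  fixes F :: "'v::euclidean_space \<Rightarrow> 'v" and T :: "'v \<Rightarrow> real \<times> real \<times> real"
  assumes T: "linear T" "inj T"
    and params: "0 < \<beta>" "0 < lam" "0 \<le> \<epsilon>" "2 * \<epsilon> \<le> \<beta>" "2 * \<epsilon> \<le> 1" "0 < c"
    and decrease: "\<forall>\<^sub>F p in nhds e.
      2 * lyap_bilinear \<beta> lam \<epsilon> (T (p - e)) (T (F p)) \<le> - c * lyap_form \<beta> lam \<epsilon> (T (p - e))"
  shows "loc_asym_stable F e"
proof -
  define V where "V p = lyap_form \<beta> lam \<epsilon> (T (p - e))" for p
  obtain B where B: "0 < B" "\<And>x. B * norm x \<le> norm (T x)"
    using linear_inj_bounded_below_pos[OF T] by blast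
  define m where "m = min \<beta> (min 1 lam)"
  have m: "0 < m" using params by (simp add: m_def)
  have "((\<lambda>p. T (p - e)) has_derivative (\<lambda>h. T h)) (at p)" for p
    using bounded_linear.has_derivative[OF linear_conv_bounded_linear[THEN iffD1, OF T(1)]]
      has_derivative_diff[OF has_derivative_ident has_derivative_const] by fastforce
  then have deriv: "(V has_derivative (\<lambda>h. 2 * lyap_bilinear \<beta> lam \<epsilon> (T (p - e)) (T h))) (at p)" for p
    unfolding V_def[abs_def] by (rule has_derivative_compose[OF _ has_derivative_lyap_form])
  have lower: "m / 2 * B\<^sup>2 * (dist p e)\<^sup>2 \<le> V p" for p
  proof -
    have "B * dist p e \<le> norm (T (p - e))" using B(2)[of "p - e"] by (simp add: dist_norm)
    then have "B\<^sup>2 * (dist p e)\<^sup>2 \<le> (norm (T (p - e)))\<^sup>2"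
      using B(1) by (metis power_mono power_mult_distrib zero_le_dist mult_nonneg_nonneg less_imp_le)
    then have "m * (B\<^sup>2 * (dist p e)\<^sup>2) \<le> lyap_form \<beta> lam 0 (T (p - e))"
      using lyap_form_ge_norm[of \<beta> lam "T (p - e)"] mult_left_mono[of _ _ m] m params
      unfolding m_def by (smt (verit))
    then show ?thesis
      using lyap_form_cross_term_bounds(1)[of lam \<epsilon> \<beta> "T (p - e)"] params by (simp add: V_def)
  qed
  have "V e = 0" using linear_0[OF T(1)] by (simp add: V_def lyap_form_def zero_prod_def)
  moreover have "0 < m / 2 * B\<^sup>2" using m B by simp
  ultimately show ?thesis
    using loc_asym_stable_by_lyapunov[OF deriv lower _ _ _ params(6)] decrease by (simp add: V_def)
qed

section \<open>The transmission factor\<close>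

lemma c_fun_pos: "0 \<le> p \<Longrightarrow> p < 1 \<Longrightarrow> 0 \<le> q \<Longrightarrow> 0 < c_fun p q"
  unfolding c_fun_def by (smt (verit) mult_left_le)

lemma p_fun_bounds: "0 < a x \<Longrightarrow> 0 < w x \<Longrightarrow> 0 < p_fun a w x \<and> p_fun a w x < 1"
  by (simp add: p_fun_def field_simps)

lemma h_fun_pos: "0 < c_fun p q \<Longrightarrow> 0 \<le> l \<Longrightarrow> 0 < h_fun l p q"
  by (simp add: h_fun_def)

lemma h_fun_zero_eq_one: "0 < c_fun p q \<Longrightarrow> h_fun 0 p q = 1"
  by (simp add: h_fun_def)

lemma p_fun_has_derivative:
  assumes "(a has_real_derivative da) (at x)" "(w has_real_derivative dw) (at x)" "a x + w x \<noteq> 0"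
  shows "(p_fun a w has_real_derivative (da * w x - a x * dw) / (a x + w x)\<^sup>2) (at x)"
  unfolding p_fun_def[abs_def]
  by (rule derivative_eq_intros assms refl | use assms(3) in \<open>simp add: field_simps power2_eq_square\<close>)+

lemma h_fun_has_derivative:
  assumes "c_fun p q + l \<noteq> 0"
  shows "((\<lambda>p. h_fun l p q) has_real_derivative - (1 - q) * l / (c_fun p q + l)\<^sup>2) (at p)"
  using assms unfolding h_fun_def[abs_def] c_fun_def
  by (auto intro!: derivative_eq_intros simp: field_simps power2_eq_square)

lemma f_fun_has_negative_derivative:
  assumes a: "(a has_real_derivative da) (at x)" "0 < a x" "0 < da"
    and w: "(w has_real_derivative dw) (at x)" "0 < w x" "dw \<le> 0"
    and q: "0 \<le> q" "q < 1" and l: "0 < l"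
  obtains fd where "(f_fun a w q l has_real_derivative fd) (at x)" "fd < 0"
proof -
  define p where "p = p_fun a w x"
  define fd where "fd = (- (1 - q) * l / (c_fun p q + l)\<^sup>2) * ((da * w x - a x * dw) / (a x + w x)\<^sup>2)"
  have c: "0 < c_fun p q" using c_fun_pos p_fun_bounds a w q by (simp add: p_def less_imp_le)
  have "(f_fun a w q l has_real_derivative fd) (at x)"
    unfolding f_fun_def[abs_def] p_def fd_def
    by (rule DERIV_chain2[OF h_fun_has_derivative p_fun_has_derivative[OF a(1) w(1)]])
      (use c l a w in \<open>simp_all add: p_def\<close>)
  moreover have "0 < da * w x - a x * dw"
    using a w by (smt (verit) mult_pos_pos mult_nonneg_nonpos)
  then have "fd < 0"
    using q l a w c unfolding fd_def by (auto intro!: mult_neg_pos divide_neg_pos divide_pos_pos)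
  ultimately show thesis by (rule that)
qed

lemma Re_hat_mul_equilibrium_eq_1:
  assumes pos: "0 < bHM" "0 < bMH" "0 < gam" "0 < mu" "0 < rho" "0 < SH" "0 < IHs" "0 < \<phi>"
    and eq_IH: "bHM * rho * SH * \<phi> * IMs = gam * IHs" and eq_IM: "bMH * \<phi> * IHs = mu * IMs"
  shows "Re_hat bHM bMH gam mu rho SH * \<phi> = 1"
proof -
  have "(bHM * rho * SH * bMH * \<phi>\<^sup>2) * IHs = bHM * rho * SH * \<phi> * (bMH * \<phi> * IHs)"
    by (simp add: power2_eq_square algebra_simps)
  also have "\<dots> = mu * (bHM * rho * SH * \<phi> * IMs)" unfolding eq_IM by (simp add: algebra_simps)
  also have "\<dots> = (gam * mu) * IHs" by (simp add: eq_IH)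
  finally have "bHM * rho * SH * bMH * \<phi>\<^sup>2 = gam * mu" using pos by simp
  then have "bHM * bMH / (gam * mu) * rho * SH = (1 / \<phi>)\<^sup>2"
    using pos by (simp add: field_simps)
  then show ?thesis using pos by (simp add: Re_hat_def)
qed

section \<open>The host-vector system near an endemic equilibrium\<close>

locale host_vector_equilibrium =
  fixes A B gam mu k :: real and \<phi> :: "real \<Rightarrow> real" and \<phi>' IHs IMs Js :: real
  assumes A: "0 < A" and B: "0 < B" and mu: "0 < mu" and gam_ge_mu: "mu \<le> gam" and k: "0 < k"
    and \<phi>_deriv: "(\<phi> has_real_derivative \<phi>') (at Js)" and \<phi>'_neg: "\<phi>' < 0" and \<phi>_pos: "0 < \<phi> Js"
    and IHs_pos: "0 < IHs"
    and eq_IH: "A * \<phi> Js * IMs = gam * IHs" and eq_IM: "B * \<phi> Js * IHs = mu * IMs"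
    and eq_J: "Js = IHs"
begin

definition rhs :: "real \<times> real \<times> real \<Rightarrow> real \<times> real \<times> real" where
  "rhs = (\<lambda>(IH, IM, J). (A * \<phi> J * IM - gam * IH, B * \<phi> J * IH - mu * IM, k * IH - k * J))"

definition u :: real where "u = A * \<phi> Js"

definition coords :: "real \<times> real \<times> real \<Rightarrow> real \<times> real \<times> real" where
  "coords = (\<lambda>(y, z, j). (mu * y + u * z, y - u / gam * z, j))"

lemma gam_pos: "0 < gam"
  using mu gam_ge_mu by simp

lemma u_pos: "0 < u"
  using A \<phi>_pos by (simp add: u_def)

lemma IMs_pos: "0 < IMs"
  using eq_IM mu B \<phi>_pos IHs_pos by (metis mult_pos_pos zero_less_mult_pos)

lemma u_B_\<phi>_eq: "u * (B * \<phi> Js) = gam * mu"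
proof -
  have "u * (B * \<phi> Js) * IHs = A * \<phi> Js * (B * \<phi> Js * IHs)" by (simp add: u_def algebra_simps)
  also have "\<dots> = mu * (A * \<phi> Js * IMs)" unfolding eq_IM by (simp add: algebra_simps)
  also have "\<dots> = gam * mu * IHs" unfolding eq_IH by simp
  finally show ?thesis using IHs_pos by simp
qed

lemma linear_coords: "linear coords"
  by (rule linearI) (auto simp: coords_def algebra_simps add_divide_distrib diff_divide_distrib)

lemma inj_coords: "inj coords"
  unfolding linear_inj_iff_eq_0[OF linear_coords]
proof (intro allI impI)
  fix x :: "real \<times> real \<times> real" assume "coords x = 0"
  then obtain y z where x: "x = (y, z, 0)" and "mu * y + u * z = 0" "y = u / gam * z"
    by (cases x) (auto simp: coords_def zero_prod_def)
  then have "u * z * (mu + gam) = 0" using gam_pos by (simp add: field_simps)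
  then show "x = 0" using x \<open>y = u / gam * z\<close> u_pos mu gam_pos by (simp add: zero_prod_def)
qed

lemma coords_rhs:
  assumes slope: "\<phi> J - \<phi> Js = Q * (J - Js)"
    and c: "coords ((IH, IM, J) - (IHs, IMs, Js)) = (\<sigma>, D, j)"
  shows "coords (rhs (IH, IM, J)) =
    (Q * (mu * A * IM + u * B * IH) * j,
     - (gam + mu) * D + Q * (A * IM - u / gam * B * IH) * j,
     k / (gam + mu) * \<sigma> + k * gam / (gam + mu) * D - k * j)"
proof -
  have \<sigma>: "\<sigma> = mu * (IH - IHs) + u * (IM - IMs)" and D: "D = IH - IHs - u / gam * (IM - IMs)"
    and j: "j = J - Js"
    using c by (auto simp: coords_def)
  have \<phi>J: "\<phi> J = \<phi> Js + Q * j" using slope j by simp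
  have uA: "A * \<phi> Js = u" by (simp add: u_def)
  have IHs_eq: "gam * IHs = u * IMs" using eq_IH by (simp add: u_def)
  have "mu * (A * \<phi> J * IM - gam * IH) + u * (B * \<phi> J * IH - mu * IM)
      = Q * (mu * A * IM + u * B * IH) * j + mu * IM * (A * \<phi> Js - u)
        + IH * (u * (B * \<phi> Js) - gam * mu)"
    unfolding \<phi>J by (simp add: algebra_simps)
  moreover have "A * \<phi> J * IM - gam * IH - u / gam * (B * \<phi> J * IH - mu * IM)
      = - (gam + mu) * D + Q * (A * IM - u / gam * B * IH) * j
        + IM * (A * \<phi> Js - u) - IH * (u * (B * \<phi> Js) - gam * mu) / gam
        + (gam + mu) / gam * (u * IMs - gam * IHs)"
    unfolding \<phi>J D using gam_pos by (simp add: field_simps)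
  moreover have "\<sigma> + gam * D = (gam + mu) * (IH - IHs)"
    unfolding \<sigma> D using gam_pos by (simp add: field_simps)
  then have "k / (gam + mu) * \<sigma> + k * gam / (gam + mu) * D = k * (IH - IHs)"
    using gam_pos mu by (simp add: divide_simps distrib_left[symmetric] mult.assoc)
  then have "k * IH - k * J = k / (gam + mu) * \<sigma> + k * gam / (gam + mu) * D - k * j"
    unfolding j using eq_J by (simp add: algebra_simps)
  ultimately show ?thesis using uA u_B_\<phi>_eq IHs_eq by (simp add: rhs_def coords_def)
qed

definition b :: real where "b = - \<phi>' * (mu * A * IMs + u * B * IHs)"

definition d :: real where "d = - \<phi>' * (A * IMs - u / gam * B * IHs)"

lemma b_pos: "0 < b"
  using \<phi>'_neg mu A u_pos B IMs_pos IHs_pos by (simp add: b_def mult_neg_pos add_pos_pos)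

lemma d_nonneg: "0 \<le> d"
proof -
  have "u * B * IHs = mu * (A * IMs)"
    using eq_IM by (simp add: u_def algebra_simps)
  then have "A * IMs - u / gam * B * IHs = A * IMs * (gam - mu) / gam"
    using gam_pos by (simp add: field_simps)
  also have "\<dots> \<ge> 0" using A IMs_pos gam_pos gam_ge_mu by simp
  finally show ?thesis using \<phi>'_neg by (simp add: d_def mult_nonpos_nonneg)
qed

lemma eventually_rhs_coords_perturbed:
  assumes "0 < \<theta>"
  shows "\<forall>\<^sub>F p in nhds (IHs, IMs, Js). \<exists>\<rho>1 \<rho>2. \<bar>\<rho>1\<bar> \<le> \<theta> \<and> \<bar>\<rho>2\<bar> \<le> \<theta> \<and>
    (\<forall>\<sigma> D j. coords (p - (IHs, IMs, Js)) = (\<sigma>, D, j) \<longrightarrow>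
      coords (rhs p) = (- b * j + \<rho>1 * j, - (gam + mu) * D - d * j + \<rho>2 * j,
                        k / (gam + mu) * \<sigma> + k * gam / (gam + mu) * D - k * j))"
proof -
  obtain Q where slope: "\<And>J. \<phi> J - \<phi> Js = Q J * (J - Js)" and Q: "isCont Q Js" "Q Js = \<phi>'"
    using \<phi>_deriv unfolding CARAT_DERIV by blast
  define \<rho>1 where "\<rho>1 p = Q (snd (snd p)) * (mu * A * fst (snd p) + u * B * fst p) + b" for p
  define \<rho>2 where "\<rho>2 p = Q (snd (snd p)) * (A * fst (snd p) - u / gam * B * fst p) + d" for p
  have "isCont (\<lambda>p. Q (snd (snd p))) (IHs, IMs, Js)"
    using isCont_o2[where f = "\<lambda>p. snd (snd p)" and a = "(IHs, IMs, Js)" and g = Q] Q(1)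
    by (simp add: continuous_intros)
  then have "isCont \<rho>1 (IHs, IMs, Js)" "isCont \<rho>2 (IHs, IMs, Js)"
    using gam_pos unfolding \<rho>1_def[abs_def] \<rho>2_def[abs_def] by (auto intro!: continuous_intros)
  moreover have "\<rho>1 (IHs, IMs, Js) = 0" "\<rho>2 (IHs, IMs, Js) = 0"
    by (simp_all add: \<rho>1_def \<rho>2_def Q(2) b_def d_def)
  ultimately have "(\<rho>1 \<longlongrightarrow> 0) (nhds (IHs, IMs, Js))" "(\<rho>2 \<longlongrightarrow> 0) (nhds (IHs, IMs, Js))"
    by (metis isCont_def tendsto_at_iff_tendsto_nhds)+
  then have "\<forall>\<^sub>F p in nhds (IHs, IMs, Js). \<bar>\<rho>1 p\<bar> < \<theta> \<and> \<bar>\<rho>2 p\<bar> < \<theta>"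
    using assms by (intro eventually_conj order_tendstoD(2)[OF tendsto_rabs_zero]) auto
  then show ?thesis
  proof (rule eventually_mono)
    fix p :: "real \<times> real \<times> real" assume "\<bar>\<rho>1 p\<bar> < \<theta> \<and> \<bar>\<rho>2 p\<bar> < \<theta>"
    moreover obtain IH IM J where p: "p = (IH, IM, J)" by (cases p) auto
    ultimately show "\<exists>\<rho>1 \<rho>2. \<bar>\<rho>1\<bar> \<le> \<theta> \<and> \<bar>\<rho>2\<bar> \<le> \<theta> \<and>
      (\<forall>\<sigma> D j. coords (p - (IHs, IMs, Js)) = (\<sigma>, D, j) \<longrightarrow>
        coords (rhs p) = (- b * j + \<rho>1 * j, - (gam + mu) * D - d * j + \<rho>2 * j,
                          k / (gam + mu) * \<sigma> + k * gam / (gam + mu) * D - k * j))"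
      using coords_rhs[OF slope] by (intro exI[of _ "\<rho>1 p"] exI[of _ "\<rho>2 p"])
        (auto simp: \<rho>1_def \<rho>2_def algebra_simps)
  qed
qed

theorem loc_asym_stable_rhs: "loc_asym_stable rhs (IHs, IMs, Js)"
proof -
  define s where "s = gam + mu"
  define e1 where "e1 = k / s"
  define e2 where "e2 = k * gam / s"
  have s: "0 < s" using gam_pos mu by (simp add: s_def)
  have e: "0 < e1" "0 < e2" "e2 \<le> k"
    using s k gam_pos mu by (auto simp: e1_def e2_def s_def field_simps)
  obtain lam \<epsilon> c \<theta> where params: "0 < lam" "0 < \<epsilon>" "2 * \<epsilon> \<le> e1 / b" "2 * \<epsilon> \<le> 1" "0 < c" "0 < \<theta>"
    and decrease: "\<And>\<sigma> D j \<rho>1 \<rho>2. \<bar>\<rho>1\<bar> \<le> \<theta> \<Longrightarrow> \<bar>\<rho>2\<bar> \<le> \<theta> \<Longrightarrow>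
      2 * lyap_bilinear (e1 / b) lam \<epsilon> (\<sigma>, D, j)
          (- b * j + \<rho>1 * j, - s * D - d * j + \<rho>2 * j, e1 * \<sigma> + e2 * D - k * j)
        \<le> - c * lyap_form (e1 / b) lam \<epsilon> (\<sigma>, D, j)"
    using perturbed_linear_system_lyapunov[OF b_pos d_nonneg s k e] by blast
  have "\<forall>\<^sub>F p in nhds (IHs, IMs, Js). 2 * lyap_bilinear (e1 / b) lam \<epsilon> (coords (p - (IHs, IMs, Js)))
      (coords (rhs p)) \<le> - c * lyap_form (e1 / b) lam \<epsilon> (coords (p - (IHs, IMs, Js)))"
    using eventually_rhs_coords_perturbed[OF params(6)]
  proof (rule eventually_mono, elim exE conjE)
    fix p \<rho>1 \<rho>2
    obtain \<sigma> D j where "coords (p - (IHs, IMs, Js)) = (\<sigma>, D, j)" by (metis prod.exhaust)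
    moreover assume "\<bar>\<rho>1\<bar> \<le> \<theta>" "\<bar>\<rho>2\<bar> \<le> \<theta>" and "\<forall>\<sigma> D j. coords (p - (IHs, IMs, Js)) = (\<sigma>, D, j) \<longrightarrow>
      coords (rhs p) = (- b * j + \<rho>1 * j, - (gam + mu) * D - d * j + \<rho>2 * j,
                        k / (gam + mu) * \<sigma> + k * gam / (gam + mu) * D - k * j)"
    ultimately show "2 * lyap_bilinear (e1 / b) lam \<epsilon> (coords (p - (IHs, IMs, Js))) (coords (rhs p))
        \<le> - c * lyap_form (e1 / b) lam \<epsilon> (coords (p - (IHs, IMs, Js)))"
      using decrease by (simp add: s_def e1_def e2_def)
  qed
  then show ?thesis
    using b_pos e(1) params by (intro loc_asym_stable_by_lyap_form[OF linear_coords inj_coords]) auto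
qed

end

theorem mainTheorem15:
  fixes a a' w w' :: "real \<Rightarrow> real"
    and q l bHM bMH gam mu rho SH k IHs IMs Js :: real
  assumes a_deriv: "\<And>x. x \<ge> 0 \<Longrightarrow> (a has_real_derivative a' x) (at x within {0..})"
    and w_deriv: "\<And>x. x \<ge> 0 \<Longrightarrow> (w has_real_derivative w' x) (at x within {0..})"
    and a'_cont: "continuous_on {0..} a'"
    and w'_cont: "continuous_on {0..} w'"
    and a_pos: "\<And>x. x \<ge> 0 \<Longrightarrow> a x > 0"
    and w_pos: "\<And>x. x \<ge> 0 \<Longrightarrow> w x > 0"
    and a'_pos: "\<And>x. x \<ge> 0 \<Longrightarrow> a' x > 0"
    and w'_nonpos: "\<And>x. x \<ge> 0 \<Longrightarrow> w' x \<le> 0"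
    and q: "0 \<le> q" "q < 1"
    and l: "l \<ge> 0"
    and SH: "SH > 0"
    and params: "bHM > 0" "bMH > 0" "gam > 0" "mu > 0" "rho > 0"
    and k: "k > 0"
    and R: "Re_hat bHM bMH gam mu rho SH * h_fun l (p_fun a w 0) q > 1"
    and equil: "rhsO a w q l bHM bMH gam mu rho SH k (IHs, IMs, Js) = (0, 0, 0)"
    and IHs_pos: "IHs > 0"
    and gam_ge_mu: "gam \<ge> mu"
  shows "loc_asym_stable (rhsO a w q l bHM bMH gam mu rho SH k) (IHs, IMs, Js)"
proof -
  let ?f = "f_fun a w q l"
  have eq: "bHM * rho * SH * ?f Js * IMs = gam * IHs" "bMH * ?f Js * IHs = mu * IMs" "Js = IHs"
    using equil k by (auto simp: rhsO_def)
  have Js: "0 < Js" using eq(3) IHs_pos by simp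
  have c: "0 < c_fun (p_fun a w x) q" if "0 \<le> x" for x
    using c_fun_pos p_fun_bounds a_pos[OF that] w_pos[OF that] q(1) by (meson less_imp_le)
  \<comment> \<open>The hypothesis on Re_hat only rules out l = 0: at an endemic equilibrium Re_hat f(Js) = 1,
    whereas h is identically 1 for l = 0.\<close>
  have l_pos: "0 < l"
  proof (rule ccontr)
    assume "\<not> 0 < l"
    then have "?f Js = 1" "h_fun l (p_fun a w 0) q = 1"
      using l c[of 0] c[of Js] Js h_fun_zero_eq_one by (auto simp: f_fun_def)
    then show False
      using R Re_hat_mul_equilibrium_eq_1[OF params(1,2,3,4,5) SH IHs_pos _ eq(1,2)] by simp
  qed
  have f_pos: "0 < ?f Js" using h_fun_pos c[of Js] Js l by (simp add: f_fun_def)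
  have at_Js: "at Js within {0..} = at Js" by (rule at_within_interior) (use Js in auto)
  obtain fd where "(?f has_real_derivative fd) (at Js)" "fd < 0"
    using f_fun_has_negative_derivative[of a "a' Js" Js w "w' Js" q l]
      a_deriv[of Js] w_deriv[of Js] a_pos[of Js] w_pos[of Js] a'_pos[of Js] w'_nonpos[of Js]
      Js at_Js q l_pos
    by auto
  then interpret host_vector_equilibrium "bHM * rho * SH" bMH gam mu k ?f fd IHs IMs Js
    using params SH k gam_ge_mu f_pos IHs_pos eq by unfold_locales auto
  have "rhs = rhsO a w q l bHM bMH gam mu rho SH k" by (simp add: rhs_def rhsO_def)
  then show ?thesis using loc_asym_stable_rhs by simp
qed

end
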